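(* Let $p\le q$ be positive integers. The complete bipartite graph $K_{p,q}$ is a TRVG if and only if $p\le 2$ or $(p,q)\in\{(3,3),(3,4)\}$.
   Context: A graph $G$ is a transparent rectangle visibility graph (TRVG) if its vertices can be represented by a collection of pairwise non-overlapping rectangles in the plane whose sides are parallel to the coordinate axes, one per vertex, such that two distinct vertices are adjacent if and only if there is a horizontal or a vertical line intersecting the interiors of both of their rectangles (other rectangles do not block visibility). *)

theory Defs
  imports Complex_Main
begin

text \<open>An axis-parallel rectangle is given by its lower-left corner (x1,y1) and
upper-right corner (x2,y2) with x1 < x2 and y1 < y2.\<close>

type_synonym rect = "(real \<times> real) \<times> (real \<times> real)"

definition valid_rect :: "rect \<Rightarrow> bool" where
  "valid_rect R \<longleftrightarrow> (case R of ((x1, y1), (x2, y2)) \<Rightarrow> x1 < x2 \<and> y1 < y2)"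

definition rect_interior :: "rect \<Rightarrow> (real \<times> real) set" where
  "rect_interior R = (case R of ((x1, y1), (x2, y2)) \<Rightarrow>
      {(x, y). x1 < x \<and> x < x2 \<and> y1 < y \<and> y < y2})"

definition hline :: "real \<Rightarrow> (real \<times> real) set" where
  "hline c = {(x, y). y = c}"

definition vline :: "real \<Rightarrow> (real \<times> real) set" where
  "vline c = {(x, y). x = c}"

definition sees :: "rect \<Rightarrow> rect \<Rightarrow> bool" where
  "sees R S \<longleftrightarrow>
     (\<exists>c. hline c \<inter> rect_interior R \<noteq> {} \<and> hline c \<inter> rect_interior S \<noteq> {}) \<or>
     (\<exists>c. vline c \<inter> rect_interior R \<noteq> {} \<and> vline c \<inter> rect_interior S \<noteq> {})"

definition TRVG :: "'a set \<Rightarrow> ('a \<Rightarrow> 'a \<Rightarrow> bool) \<Rightarrow> bool" where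
  "TRVG V E \<longleftrightarrow> (\<exists>r :: 'a \<Rightarrow> rect.
      (\<forall>v\<in>V. valid_rect (r v)) \<and>
      (\<forall>u\<in>V. \<forall>v\<in>V. u \<noteq> v \<longrightarrow> rect_interior (r u) \<inter> rect_interior (r v) = {}) \<and>
      (\<forall>u\<in>V. \<forall>v\<in>V. u \<noteq> v \<longrightarrow> (E u v \<longleftrightarrow> sees (r u) (r v))))"

definition Kpq_vertices :: "nat \<Rightarrow> nat \<Rightarrow> (nat + nat) set" where
  "Kpq_vertices p q = Inl ` {..<p} \<union> Inr ` {..<q}"

definition Kpq_adj :: "(nat + nat) \<Rightarrow> (nat + nat) \<Rightarrow> bool" where
  "Kpq_adj u v \<longleftrightarrow> (isl u \<and> \<not> isl v) \<or> (\<not> isl u \<and> isl v)"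

end

theory Submission
  imports Defs
begin

text \<open>Two rectangles of the same part of \<open>K\<^sub>p\<^sub>,\<^sub>q\<close> must not see each other, so within
  each part the x-projections are pairwise disjoint open intervals, and so are the y-projections.
  For two such families of intervals, mapping an intersecting pair to the member that ends first
  is injective and misses the interval that ends last; hence there are at most \<open>p + q - 1\<close>
  intersecting pairs per axis. Every one of the \<open>p q\<close> edges needs an intersecting pair on some
  axis, so \<open>p q \<le> 2 (p + q - 1)\<close>, which leaves only \<open>p \<le> 2\<close>, \<open>(3, 3)\<close> and \<open>(3, 4)\<close>.
  Conversely, explicit layouts of squares realise \<open>K\<^sub>2\<^sub>,\<^sub>q\<close> and \<open>K\<^sub>3\<^sub>,\<^sub>4\<close>,
  and every induced subgraph of a TRVG is a TRVG.\<close>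

definition xproj :: "rect \<Rightarrow> real set" where
  "xproj R = {fst (fst R)<..<fst (snd R)}"

definition yproj :: "rect \<Rightarrow> real set" where
  "yproj R = {snd (fst R)<..<snd (snd R)}"

lemma rect_interior_eq_Times: "rect_interior R = xproj R \<times> yproj R"
  by (auto simp: rect_interior_def xproj_def yproj_def split: prod.splits)

lemma valid_rect_iff_proj: "valid_rect R \<longleftrightarrow> xproj R \<noteq> {} \<and> yproj R \<noteq> {}"
  by (auto simp: valid_rect_def xproj_def yproj_def split: prod.splits)

lemma rect_interior_disjoint_iff:
  "rect_interior R \<inter> rect_interior S = {} \<longleftrightarrow> xproj R \<inter> xproj S = {} \<or> yproj R \<inter> yproj S = {}"
  by (simp add: rect_interior_eq_Times Times_Int_Times)

lemma sees_iff_proj: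
  assumes "valid_rect R" "valid_rect S"
  shows "sees R S \<longleftrightarrow> xproj R \<inter> xproj S \<noteq> {} \<or> yproj R \<inter> yproj S \<noteq> {}"
proof -
  have line_meets: "hline c \<inter> rect_interior T \<noteq> {} \<longleftrightarrow> c \<in> yproj T"
    "vline c \<inter> rect_interior T \<noteq> {} \<longleftrightarrow> c \<in> xproj T" if "valid_rect T" for c T
    using that by (auto simp: rect_interior_eq_Times hline_def vline_def valid_rect_iff_proj)
  show ?thesis
    unfolding sees_def line_meets[OF assms(1)] line_meets[OF assms(2)] by blast
qed

lemma greaterThanLessThan_Int_ne_if_end_le:
  fixes a b c d e f :: "'a::dense_linorder"
  assumes "{a<..<b} \<inter> {c<..<d} \<noteq> {}" "{a<..<b} \<inter> {e<..<f} \<noteq> {}" "b \<le> d" "b \<le> f"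
  shows "{c<..<d} \<inter> {e<..<f} \<noteq> {}"
  using assms by (auto simp: not_le le_max_iff_disj min_le_iff_disj intro: less_le_trans)

definition earlier_ending :: "('a \<Rightarrow> 'c::linorder) \<Rightarrow> ('b \<Rightarrow> 'c) \<Rightarrow> 'a \<times> 'b \<Rightarrow> 'a + 'b" where
  "earlier_ending r r' = (\<lambda>(i, j). if r i \<le> r' j then Inl i else Inr j)"

lemma inj_on_earlier_ending:
  fixes l r :: "'a \<Rightarrow> 'c::dense_linorder" and l' r' :: "'b \<Rightarrow> 'c"
  assumes disjA: "pairwise (\<lambda>i i'. {l i<..<r i} \<inter> {l i'<..<r i'} = {}) A"
    and disjB: "pairwise (\<lambda>j j'. {l' j<..<r' j} \<inter> {l' j'<..<r' j'} = {}) B"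
  shows "inj_on (earlier_ending r r') {(i, j) \<in> A \<times> B. {l i<..<r i} \<inter> {l' j<..<r' j} \<noteq> {}}"
proof (rule inj_onI, clarify)
  fix i j i' j'
  assume "i \<in> A" "j \<in> B" "i' \<in> A" "j' \<in> B"
    and meet: "{l i<..<r i} \<inter> {l' j<..<r' j} \<noteq> {}" "{l i'<..<r i'} \<inter> {l' j'<..<r' j'} \<noteq> {}"
    and eq: "earlier_ending r r' (i, j) = earlier_ending r r' (i', j')"
  show "i = i' \<and> j = j'"
  proof (cases "r i \<le> r' j")
    case True
    with eq have "i' = i" "r i \<le> r' j'"
      by (auto simp: earlier_ending_def split: if_splits)
    with True meet have "{l' j<..<r' j} \<inter> {l' j'<..<r' j'} \<noteq> {}"
      using greaterThanLessThan_Int_ne_if_end_le by blast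
    with disjB \<open>j \<in> B\<close> \<open>j' \<in> B\<close> \<open>i' = i\<close> show ?thesis
      unfolding pairwise_def by blast
  next
    case False
    with eq have "j' = j" "r' j \<le> r i" "r' j \<le> r i'"
      by (auto simp: earlier_ending_def split: if_splits)
    with meet have "{l i<..<r i} \<inter> {l i'<..<r i'} \<noteq> {}"
      using greaterThanLessThan_Int_ne_if_end_le[of "l' j" "r' j"] by (metis Int_commute)
    with disjA \<open>i \<in> A\<close> \<open>i' \<in> A\<close> \<open>j' = j\<close> show ?thesis
      unfolding pairwise_def by blast
  qed
qed

lemma earlier_ending_not_surj:
  fixes r :: "'a \<Rightarrow> 'c::linorder" and r' :: "'b \<Rightarrow> 'c"
  assumes "finite A" "finite B" "A \<noteq> {} \<or> B \<noteq> {}"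
  shows "earlier_ending r r' ` (A \<times> B) \<subset> A <+> B"
proof -
  define M where "M = Max (r ` A \<union> r' ` B)"
  have le_M: "\<And>i. i \<in> A \<Longrightarrow> r i \<le> M" "\<And>j. j \<in> B \<Longrightarrow> r' j \<le> M"
    using assms(1,2) by (auto simp: M_def)
  have "M \<in> r ` A \<union> r' ` B"
    using assms unfolding M_def by (intro Max_in) auto
  then consider j where "j \<in> B" "r' j = M" | i where "i \<in> A" "r i = M" "\<forall>j\<in>B. r' j < M"
    using le_M by (metis UnE imageE order_less_le)
  then have "\<exists>z \<in> A <+> B. z \<notin> earlier_ending r r' ` (A \<times> B)"
  proof cases
    case 1
    then show ?thesis
      using le_M by (intro bexI[of _ "Inr j"]) (auto simp: earlier_ending_def split: if_splits)
  next
    case 2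
    then show ?thesis
      by (intro bexI[of _ "Inl i"]) (auto simp: earlier_ending_def split: if_splits)
  qed
  moreover have "earlier_ending r r' ` (A \<times> B) \<subseteq> A <+> B"
    by (auto simp: earlier_ending_def)
  ultimately show ?thesis
    by blast
qed

lemma card_intersecting_pairs_le:
  fixes l r :: "'a \<Rightarrow> 'c::dense_linorder" and l' r' :: "'b \<Rightarrow> 'c"
    and A :: "'a set" and B :: "'b set"
  assumes "finite A" "finite B" "A \<noteq> {} \<or> B \<noteq> {}"
    and "pairwise (\<lambda>i i'. {l i<..<r i} \<inter> {l i'<..<r i'} = {}) A"
    and "pairwise (\<lambda>j j'. {l' j<..<r' j} \<inter> {l' j'<..<r' j'} = {}) B"
  shows "card {(i, j) \<in> A \<times> B. {l i<..<r i} \<inter> {l' j<..<r' j} \<noteq> {}} + 1 \<le> card A + card B"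
proof -
  let ?P = "{(i, j) \<in> A \<times> B. {l i<..<r i} \<inter> {l' j<..<r' j} \<noteq> {}}"
  have "card ?P = card (earlier_ending r r' ` ?P)"
    using inj_on_earlier_ending[OF assms(4,5)] by (simp add: card_image)
  also have "\<dots> < card (A <+> B)"
    using earlier_ending_not_surj[OF assms(1-3), of r r'] assms(1,2)
    by (intro psubset_card_mono) auto
  finally show ?thesis
    using assms(1,2) by (simp add: card_Plus)
qed

lemma TRVG_subset:
  assumes "TRVG V E" "W \<subseteq> V"
  shows "TRVG W E"
proof -
  obtain r where "\<forall>v\<in>V. valid_rect (r v)"
      "\<forall>u\<in>V. \<forall>v\<in>V. u \<noteq> v \<longrightarrow> rect_interior (r u) \<inter> rect_interior (r v) = {}"
      "\<forall>u\<in>V. \<forall>v\<in>V. u \<noteq> v \<longrightarrow> (E u v \<longleftrightarrow> sees (r u) (r v))"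
    using assms(1) unfolding TRVG_def by blast
  with assms(2) show ?thesis
    unfolding TRVG_def by (intro exI[of _ r]) blast
qed

lemma TRVG_card_edges_between_independent_sets:
  assumes "TRVG V E" "A \<subseteq> V" "B \<subseteq> V" "finite A" "finite B" "A \<union> B \<noteq> {}"
    and "pairwise (\<lambda>u v. \<not> E u v) A" "pairwise (\<lambda>u v. \<not> E u v) B"
  shows "card {(a, b) \<in> A \<times> B. E a b} + 2 \<le> 2 * (card A + card B)"
proof -
  obtain r where valid: "\<forall>v\<in>V. valid_rect (r v)"
    and adj: "\<forall>u\<in>V. \<forall>v\<in>V. u \<noteq> v \<longrightarrow> (E u v \<longleftrightarrow> sees (r u) (r v))"
    using assms(1) unfolding TRVG_def by blast
  have adj_iff: "E u v \<longleftrightarrow> xproj (r u) \<inter> xproj (r v) \<noteq> {} \<or> yproj (r u) \<inter> yproj (r v) \<noteq> {}"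
    if "u \<in> V" "v \<in> V" "u \<noteq> v" for u v
    using that adj valid by (simp add: sees_iff_proj)
  have indep: "pairwise (\<lambda>u v. xproj (r u) \<inter> xproj (r v) = {}) C"
    "pairwise (\<lambda>u v. yproj (r u) \<inter> yproj (r v) = {}) C"
    if "C \<subseteq> V" "pairwise (\<lambda>u v. \<not> E u v) C" for C
    using that adj_iff unfolding pairwise_def by (meson subsetD)+
  define PX where "PX = {(a, b) \<in> A \<times> B. xproj (r a) \<inter> xproj (r b) \<noteq> {}}"
  define PY where "PY = {(a, b) \<in> A \<times> B. yproj (r a) \<inter> yproj (r b) \<noteq> {}}"
  have "(a, b) \<in> PX \<union> PY" if "a \<in> A" "b \<in> B" "E a b" for a b
  proof (cases "a = b")
    case True
    with that assms(2) valid show ?thesis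
      by (auto simp: PX_def valid_rect_iff_proj)
  next
    case False
    with that assms(2,3) adj_iff show ?thesis
      by (auto simp: PX_def PY_def)
  qed
  moreover have "finite PX" "finite PY"
    using assms(4,5) by (auto simp: PX_def PY_def intro: finite_subset[of _ "A \<times> B"])
  ultimately have "card {(a, b) \<in> A \<times> B. E a b} \<le> card (PX \<union> PY)"
    by (intro card_mono) auto
  also have "\<dots> \<le> card PX + card PY"
    by (rule card_Un_le)
  finally have "card {(a, b) \<in> A \<times> B. E a b} \<le> card PX + card PY" .
  moreover have "card PX + 1 \<le> card A + card B"
    unfolding PX_def xproj_def
    by (rule card_intersecting_pairs_le)
      (use assms(4-6) indep(1)[OF assms(2,7)] indep(1)[OF assms(3,8)] in \<open>auto simp: xproj_def\<close>)
  moreover have "card PY + 1 \<le> card A + card B"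
    unfolding PY_def yproj_def
    by (rule card_intersecting_pairs_le)
      (use assms(4-6) indep(2)[OF assms(2,7)] indep(2)[OF assms(3,8)] in \<open>auto simp: yproj_def\<close>)
  ultimately show ?thesis
    unfolding distrib_left by linarith
qed

lemma Kpq_vertices_mono: "p \<le> p' \<Longrightarrow> q \<le> q' \<Longrightarrow> Kpq_vertices p q \<subseteq> Kpq_vertices p' q'"
  by (auto simp: Kpq_vertices_def)

lemma TRVG_Kpq_card_bound:
  assumes "TRVG (Kpq_vertices p q) Kpq_adj" "0 < p + q"
  shows "p * q + 2 \<le> 2 * (p + q)"
proof -
  have "pairwise (\<lambda>u v. \<not> Kpq_adj u v) (Inl ` {..<p})" "pairwise (\<lambda>u v. \<not> Kpq_adj u v) (Inr ` {..<q})"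
    by (auto simp: pairwise_def Kpq_adj_def)
  moreover have "{(a, b) \<in> Inl ` {..<p} \<times> Inr ` {..<q}. Kpq_adj a b} = Inl ` {..<p} \<times> Inr ` {..<q}"
    by (auto simp: Kpq_adj_def)
  ultimately show ?thesis
    using TRVG_card_edges_between_independent_sets[OF assms(1), of "Inl ` {..<p}" "Inr ` {..<q}"] assms(2)
    by (simp add: Kpq_vertices_def card_cartesian_product card_image lessThan_empty_iff)
qed

lemma le_2_or_3_3_or_3_4_if_mult_le:
  fixes p q :: nat
  assumes "1 \<le> p" "p \<le> q" "p * q + 2 \<le> 2 * (p + q)"
  shows "p \<le> 2 \<or> (p, q) \<in> {(3, 3), (3, 4)}"
proof (cases "p \<le> 3")
  case True
  with assms show ?thesis by (cases "p = 3") auto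
next
  case False
  then have "4 * q \<le> p * q" by simp
  with assms have False by arith
  then show ?thesis ..
qed

definition square :: "real \<Rightarrow> real \<Rightarrow> real \<Rightarrow> rect" where
  "square x y s = ((x, y), (x + s, y + s))"

lemma xproj_square [simp]: "xproj (square x y s) = {x<..<x + s}"
  and yproj_square [simp]: "yproj (square x y s) = {y<..<y + s}"
  and valid_rect_square [simp]: "valid_rect (square x y s) \<longleftrightarrow> 0 < s"
  by (simp_all add: square_def xproj_def yproj_def valid_rect_def)

lemma TRVG_KpqI:
  fixes a b :: "nat \<Rightarrow> rect"
  assumes valid: "\<And>i. i < p \<Longrightarrow> valid_rect (a i)" "\<And>j. j < q \<Longrightarrow> valid_rect (b j)"
    and disj_a: "\<And>i i'. i < p \<Longrightarrow> i' < p \<Longrightarrow> i \<noteq> i' \<Longrightarrow>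
      xproj (a i) \<inter> xproj (a i') = {} \<and> yproj (a i) \<inter> yproj (a i') = {}"
    and disj_b: "\<And>j j'. j < q \<Longrightarrow> j' < q \<Longrightarrow> j \<noteq> j' \<Longrightarrow>
      xproj (b j) \<inter> xproj (b j') = {} \<and> yproj (b j) \<inter> yproj (b j') = {}"
    and cross: "\<And>i j. i < p \<Longrightarrow> j < q \<Longrightarrow>
      xproj (a i) \<inter> xproj (b j) = {} \<longleftrightarrow> yproj (a i) \<inter> yproj (b j) \<noteq> {}"
  shows "TRVG (Kpq_vertices p q) Kpq_adj"
proof -
  let ?r = "case_sum a b"
  have valid_r: "valid_rect (?r v)" if "v \<in> Kpq_vertices p q" for v
    using that valid by (auto simp: Kpq_vertices_def)
  have "rect_interior (?r u) \<inter> rect_interior (?r v) = {} \<and> (Kpq_adj u v \<longleftrightarrow> sees (?r u) (?r v))"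
    if u: "u \<in> Kpq_vertices p q" and v: "v \<in> Kpq_vertices p q" and "u \<noteq> v" for u v
  proof -
    note iffs = rect_interior_disjoint_iff sees_iff_proj valid Kpq_adj_def
    from u v consider
        i i' where "i < p" "i' < p" "u = Inl i" "v = Inl i'"
      | i j where "i < p" "j < q" "u = Inl i" "v = Inr j"
      | i j where "i < p" "j < q" "u = Inr j" "v = Inl i"
      | j j' where "j < q" "j' < q" "u = Inr j" "v = Inr j'"
      by (auto simp: Kpq_vertices_def)
    then show ?thesis
    proof cases
      case 1
      with disj_a[of i i'] \<open>u \<noteq> v\<close> show ?thesis by (simp add: iffs)
    next
      case 2
      with cross[of i j] show ?thesis by (simp add: iffs)
    next
      case 3
      with cross[of i j] show ?thesis by (simp add: iffs inf_commute)
    next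
      case 4
      with disj_b[of j j'] \<open>u \<noteq> v\<close> show ?thesis by (simp add: iffs)
    qed
  qed
  with valid_r show ?thesis
    unfolding TRVG_def by (intro exI[of _ ?r]) blast
qed

lemma TRVG_K2q: "TRVG (Kpq_vertices 2 q) Kpq_adj"
proof -
  define s where "s = real q + 1"
  have "real j + 1 < s" if "j < q" for j
    using that by (simp add: s_def)
  then show ?thesis
    by (intro TRVG_KpqI[where a = "\<lambda>i. if i = 0 then square 0 0 s else square s s s"
          and b = "\<lambda>j. square (real j) (s + real j) 1"])
      (auto simp: s_def min_le_iff_disj le_max_iff_disj)
qed

lemma TRVG_K34: "TRVG (Kpq_vertices 3 4) Kpq_adj"
proof -
  have three: "i < 3 \<longleftrightarrow> i = 0 \<or> i = 1 \<or> i = 2" and four: "j < 4 \<longleftrightarrow> j = 0 \<or> j = 1 \<or> j = 2 \<or> j = 3"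
    for i j :: nat by auto
  show ?thesis
    by (rule TRVG_KpqI[where a = "(!) [square 2 10 3, square 6 6 3, square 10 2 3]"
          and b = "(!) [square 0 4 3, square 4 0 3, square 8 12 3, square 12 8 3]"])
      (auto simp: three four)
qed

theorem theorem3:
  fixes p q :: nat
  assumes "1 \<le> p" and "p \<le> q"
  shows "TRVG (Kpq_vertices p q) Kpq_adj \<longleftrightarrow> p \<le> 2 \<or> (p, q) \<in> {(3, 3), (3, 4)}"
proof
  assume "TRVG (Kpq_vertices p q) Kpq_adj"
  with assms have "p * q + 2 \<le> 2 * (p + q)"
    by (intro TRVG_Kpq_card_bound) auto
  with assms show "p \<le> 2 \<or> (p, q) \<in> {(3, 3), (3, 4)}"
    by (rule le_2_or_3_3_or_3_4_if_mult_le)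
next
  assume "p \<le> 2 \<or> (p, q) \<in> {(3, 3), (3, 4)}"
  then show "TRVG (Kpq_vertices p q) Kpq_adj"
  proof
    assume "p \<le> 2"
    then show ?thesis
      using TRVG_subset[OF TRVG_K2q Kpq_vertices_mono] by blast
  next
    assume "(p, q) \<in> {(3, 3), (3, 4)}"
    then show ?thesis
      using TRVG_subset[OF TRVG_K34 Kpq_vertices_mono] by auto
  qed
qed

end
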